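(* If $\gamma\in\Gamma\cap\mathcal{I}_\Gamma$ (i.e. $\gamma\in\Gamma$ with $\gamma^\dagger=\gamma$), then the complete geodesic hyperplane perpendicularly bisecting the geodesic segment from $1$ to $\mu_\Gamma(\gamma,1)$ does so at the point $\gamma$, so that $\gamma$ is the closest point to $1$ on this hyperplane.
   Context: $X$ is a Macfarlane complete orientable finite-volume hyperbolic 3-manifold, and the Kleinian group $\Gamma\cong\pi_1(X)$ is chosen so that its quaternion algebra (the $K$-span of the preimage of $\Gamma$ in $\mathrm{SL}_2(\mathbb{C})$, $K$ the trace field) is $\mathcal{B}=\big(\frac{a,b}{F(\sqrt{-d})}\big)$ with $i^2=a$, $j^2=b$, $ij=-ji$, where $F\subset\mathbb{R}$ and $a,b,d\in F$ are positive; $\Gamma$ is identified with its image in $\mathcal{B}^1/\{\pm1\}$. The involution is $(w+xi+yj+zij)^\dagger=\overline{w}+\overline{x}i+\overline{y}j-\overline{z}ij$; $\mathcal{M}=\{q:q^\dagger=q\}=F\oplus Fi\oplus Fj\oplus\sqrt{-d}Fij$, and $\mathcal{I}_\Gamma=\{p\in\mathcal{M}:\mathrm{tr}(p)>0,\ \mathrm{n}(p)=1\}$ (reduced trace and norm), a hyperboloid model on which $\Gamma$ acts faithfully by hyperbolic isometries via $\mu_\Gamma(\gamma,p)=\gamma p\gamma^\dagger$. *)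

theory Defs
  imports Complex_Main
begin

text \<open>Quaternion algebra (a,b / K) with K = F(sqrt(-d)) a subfield of the complex
numbers (F a subfield of the reals).  An element w + x i + y j + z ij is represented
by its four coordinates; coordinates are complex so that the real points
(B tensor_F R) are available for the hyperboloid model.\<close>

datatype quat = Quat (qw: complex) (qx: complex) (qy: complex) (qz: complex)

definition qone :: quat where "qone = Quat 1 0 0 0"

text \<open>Multiplication with i^2 = a, j^2 = b, ij = -ji.\<close>
definition qmul :: "real \<Rightarrow> real \<Rightarrow> quat \<Rightarrow> quat \<Rightarrow> quat" where
  "qmul a b p q =
     Quat (qw p * qw q + of_real a * qx p * qx q + of_real b * qy p * qy q
             - of_real (a * b) * qz p * qz q)
          (qw p * qx q + qx p * qw q - of_real b * qy p * qz q + of_real b * qz p * qy q)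
          (qw p * qy q + qy p * qw q + of_real a * qx p * qz q - of_real a * qz p * qx q)
          (qw p * qz q + qz p * qw q + qx p * qy q - qy p * qx q)"

definition qconj :: "quat \<Rightarrow> quat" where
  "qconj q = Quat (qw q) (- qx q) (- qy q) (- qz q)"

definition qdag :: "quat \<Rightarrow> quat" where
  "qdag q = Quat (cnj (qw q)) (cnj (qx q)) (cnj (qy q)) (- cnj (qz q))"

definition qtr :: "quat \<Rightarrow> complex" where
  "qtr q = 2 * qw q"

definition qnrm :: "real \<Rightarrow> real \<Rightarrow> quat \<Rightarrow> complex" where
  "qnrm a b q = qw q ^ 2 - of_real a * qx q ^ 2 - of_real b * qy q ^ 2
                 + of_real (a * b) * qz q ^ 2"

definition real_subfield :: "real set \<Rightarrow> bool" where
  "real_subfield F \<longleftrightarrow> 0 \<in> F \<and> 1 \<in> F \<and>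
     (\<forall>x\<in>F. \<forall>y\<in>F. x + y \<in> F \<and> x - y \<in> F \<and> x * y \<in> F) \<and>
     (\<forall>x\<in>F. x \<noteq> 0 \<longrightarrow> inverse x \<in> F)"

text \<open>K = F(sqrt(-d)), with sqrt(-d) = i * sqrt d inside the complex numbers.\<close>
definition trace_field :: "real set \<Rightarrow> real \<Rightarrow> complex set" where
  "trace_field F d = {of_real u + of_real v * \<i> * of_real (sqrt d) | u v. u \<in> F \<and> v \<in> F}"

definition quat_alg :: "real set \<Rightarrow> real \<Rightarrow> quat set" where
  "quat_alg F d = {q. qw q \<in> trace_field F d \<and> qx q \<in> trace_field F d \<and>
                      qy q \<in> trace_field F d \<and> qz q \<in> trace_field F d}"

definition quat_alg1 :: "real set \<Rightarrow> real \<Rightarrow> real \<Rightarrow> real \<Rightarrow> quat set" where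
  "quat_alg1 F a b d = {q \<in> quat_alg F d. qnrm a b q = 1}"

definition hyperboloid :: "real \<Rightarrow> real \<Rightarrow> quat set" where
  "hyperboloid a b = {p. qdag p = p \<and> Re (qtr p) > 0 \<and> qnrm a b p = 1}"

definition qact :: "real \<Rightarrow> real \<Rightarrow> quat \<Rightarrow> quat \<Rightarrow> quat" where
  "qact a b g p = qmul a b (qmul a b g p) (qdag g)"

definition qform :: "real \<Rightarrow> real \<Rightarrow> quat \<Rightarrow> quat \<Rightarrow> complex" where
  "qform a b p q = qtr (qmul a b p (qconj q)) / 2"

definition hdist :: "real \<Rightarrow> real \<Rightarrow> quat \<Rightarrow> quat \<Rightarrow> real" where
  "hdist a b p q = arcosh (Re (qform a b p q))"

definition geod_segment :: "real \<Rightarrow> real \<Rightarrow> quat \<Rightarrow> quat \<Rightarrow> quat set" where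
  "geod_segment a b P Q =
     {p \<in> hyperboloid a b. hdist a b P p + hdist a b p Q = hdist a b P Q}"

definition perp_bisector :: "real \<Rightarrow> real \<Rightarrow> quat \<Rightarrow> quat \<Rightarrow> quat set" where
  "perp_bisector a b P Q = {p \<in> hyperboloid a b. hdist a b p P = hdist a b p Q}"

end

theory Submission
  imports Defs
begin

text \<open>For \<open>\<gamma> = \<gamma>\<^sup>\<dagger>\<close> we have \<open>\<mu>(\<gamma>, 1) = \<gamma>\<^sup>2\<close>, and Cayley--Hamilton gives
\<open>\<gamma>\<^sup>2 = 2\<gamma>\<^sub>0 \<gamma> - 1\<close>, so \<open>\<langle>p, \<gamma>\<^sup>2\<rangle> = 2\<gamma>\<^sub>0 \<langle>p, \<gamma>\<rangle> - \<langle>p, 1\<rangle>\<close>.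
Since \<open>cosh d = \<langle>-,-\<rangle>\<close>, a point \<open>p\<close> is equidistant from \<open>1\<close> and \<open>\<gamma>\<^sup>2\<close> iff
\<open>\<langle>p, 1\<rangle> = \<gamma>\<^sub>0 \<langle>p, \<gamma>\<rangle>\<close>. The reverse Cauchy--Schwarz inequality \<open>\<langle>p, \<gamma>\<rangle> \<ge> 1\<close>
on the hyperboloid, with equality only for \<open>p = \<gamma>\<close>, then shows that on the bisector
\<open>cosh d(1, p) \<ge> \<gamma>\<^sub>0 = cosh d(1, \<gamma>)\<close> with equality only at \<open>\<gamma>\<close>; and
\<open>d(1, \<gamma>\<^sup>2) = 2 d(1, \<gamma>) = d(1, \<gamma>) + d(\<gamma>, \<gamma>\<^sup>2)\<close> puts \<open>\<gamma>\<close> on the segment.\<close>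

lemma qform_eq:
  "qform a b p q = qw p * qw q - of_real a * qx p * qx q - of_real b * qy p * qy q
     + of_real (a * b) * qz p * qz q"
  by (simp add: qform_def qmul_def qconj_def qtr_def)

lemma qform_commute: "qform a b p q = qform a b q p"
  by (simp add: qform_eq algebra_simps)

lemma qform_qone_right [simp]: "qform a b p qone = qw p"
  by (simp add: qform_eq qone_def)

lemma qform_qone_left [simp]: "qform a b qone p = qw p"
  by (simp add: qform_eq qone_def)

lemma qform_self: "qform a b q q = qnrm a b q"
  by (simp add: qform_eq qnrm_def power2_eq_square)

lemma qmul_self:
  "qmul a b q q = Quat (qtr q * qw q - qnrm a b q) (qtr q * qx q) (qtr q * qy q) (qtr q * qz q)"
  by (simp add: qmul_def qtr_def qnrm_def power2_eq_square algebra_simps)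

lemma qform_qmul_self:
  "qform a b p (qmul a b q q) = qtr q * qform a b p q - qnrm a b q * qw p"
  by (simp add: qmul_self qform_eq algebra_simps)

lemma qnrm_qmul: "qnrm a b (qmul a b p q) = qnrm a b p * qnrm a b q"
  by (simp add: qnrm_def qmul_def power2_eq_square algebra_simps)

lemma qact_qone: "qdag g = g \<Longrightarrow> qact a b g qone = qmul a b g g"
  by (cases g) (simp add: qact_def qmul_def qone_def)

lemma mem_hyperboloid_iff:
  "p \<in> hyperboloid a b \<longleftrightarrow>
     Im (qw p) = 0 \<and> Im (qx p) = 0 \<and> Im (qy p) = 0 \<and> Re (qz p) = 0 \<and> Re (qw p) > 0 \<and>
     (Re (qw p))\<^sup>2 - a * (Re (qx p))\<^sup>2 - b * (Re (qy p))\<^sup>2 - a * b * (Im (qz p))\<^sup>2 = 1"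
  by (cases p) (auto simp: hyperboloid_def qdag_def qtr_def qnrm_def complex_eq_iff power2_eq_square)

lemma Re_qform_hyperboloid:
  assumes "p \<in> hyperboloid a b" "q \<in> hyperboloid a b"
  shows "Re (qform a b p q) = Re (qw p) * Re (qw q) - a * Re (qx p) * Re (qx q)
           - b * Re (qy p) * Re (qy q) - a * b * Im (qz p) * Im (qz q)"
  using assms by (simp add: mem_hyperboloid_iff qform_eq)

lemma quat_eq_hyperboloid:
  assumes "p \<in> hyperboloid a b" "q \<in> hyperboloid a b"
  shows "p = q \<longleftrightarrow> Re (qw p) = Re (qw q) \<and> Re (qx p) = Re (qx q) \<and> Re (qy p) = Re (qy q)
           \<and> Im (qz p) = Im (qz q)"
  using assms by (cases p; cases q) (auto simp: mem_hyperboloid_iff complex_eq_iff)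

lemma qone_in_hyperboloid: "qone \<in> hyperboloid a b"
  by (simp add: mem_hyperboloid_iff qone_def)

lemma reverse_cauchy_schwarz:
  fixes c1 c2 c3 u0 u1 u2 u3 v0 v1 v2 v3 :: real
  assumes c: "c1 > 0" "c2 > 0" "c3 > 0" and pos: "u0 > 0" "v0 > 0"
    and u: "u0\<^sup>2 - c1 * u1\<^sup>2 - c2 * u2\<^sup>2 - c3 * u3\<^sup>2 = 1"
    and v: "v0\<^sup>2 - c1 * v1\<^sup>2 - c2 * v2\<^sup>2 - c3 * v3\<^sup>2 = 1"
  shows "u0 * v0 - c1 * u1 * v1 - c2 * u2 * v2 - c3 * u3 * v3 \<ge> 1"
    and "u0 * v0 - c1 * u1 * v1 - c2 * u2 * v2 - c3 * u3 * v3 = 1 \<longleftrightarrow>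
           u0 = v0 \<and> u1 = v1 \<and> u2 = v2 \<and> u3 = v3"
proof -
  define s where "s = c1 * u1 * v1 + c2 * u2 * v2 + c3 * u3 * v3"
  define D where "D = c1 * (u1 - v1)\<^sup>2 + c2 * (u2 - v2)\<^sup>2 + c3 * (u3 - v3)\<^sup>2"
  define L where "L = c1 * c2 * (u1 * v2 - u2 * v1)\<^sup>2 + c1 * c3 * (u1 * v3 - u3 * v1)\<^sup>2
                       + c2 * c3 * (u2 * v3 - u3 * v2)\<^sup>2"
  have "D \<ge> 0" "L \<ge> 0"
    unfolding D_def L_def using c by (intro add_nonneg_nonneg mult_nonneg_nonneg; simp)+
  \<comment> \<open>Lagrange's identity for the positive definite part, combined with both norm equations\<close>
  have key: "(u0 * v0)\<^sup>2 - (1 + s)\<^sup>2 = D + L"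
    using u v unfolding s_def D_def L_def
    by (simp add: power_mult_distrib eq_diff_eq[symmetric]) (simp add: power2_eq_square algebra_simps)
  have ge: "u0 * v0 \<ge> 1 + s"
  proof (rule ccontr)
    assume "\<not> ?thesis"
    then have "(u0 * v0)\<^sup>2 < (1 + s)\<^sup>2"
      using pos by (intro power_strict_mono) auto
    with key \<open>D \<ge> 0\<close> \<open>L \<ge> 0\<close> show False by simp
  qed
  then show "u0 * v0 - c1 * u1 * v1 - c2 * u2 * v2 - c3 * u3 * v3 \<ge> 1"
    unfolding s_def by simp
  show "u0 * v0 - c1 * u1 * v1 - c2 * u2 * v2 - c3 * u3 * v3 = 1 \<longleftrightarrow>
           u0 = v0 \<and> u1 = v1 \<and> u2 = v2 \<and> u3 = v3"
  proof
    assume "u0 * v0 - c1 * u1 * v1 - c2 * u2 * v2 - c3 * u3 * v3 = 1"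
    then have "u0 * v0 = 1 + s"
      unfolding s_def by simp
    with key \<open>D \<ge> 0\<close> \<open>L \<ge> 0\<close> have "D = 0"
      by simp
    moreover have "c1 * (u1 - v1)\<^sup>2 \<ge> 0" "c2 * (u2 - v2)\<^sup>2 \<ge> 0" "c3 * (u3 - v3)\<^sup>2 \<ge> 0"
      using c by simp_all
    ultimately have "c1 * (u1 - v1)\<^sup>2 = 0" "c2 * (u2 - v2)\<^sup>2 = 0" "c3 * (u3 - v3)\<^sup>2 = 0"
      unfolding D_def by linarith+
    then have "u1 = v1" "u2 = v2" "u3 = v3"
      using c by simp_all
    with u v have "u0\<^sup>2 = v0\<^sup>2" by simp
    with pos have "u0 = v0" by (simp add: power2_eq_iff)
    with \<open>u1 = v1\<close> \<open>u2 = v2\<close> \<open>u3 = v3\<close> show "u0 = v0 \<and> u1 = v1 \<and> u2 = v2 \<and> u3 = v3"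
      by simp
  next
    assume "u0 = v0 \<and> u1 = v1 \<and> u2 = v2 \<and> u3 = v3"
    with u show "u0 * v0 - c1 * u1 * v1 - c2 * u2 * v2 - c3 * u3 * v3 = 1"
      by (simp add: power2_eq_square)
  qed
qed

lemma qform_hyperboloid_ge_one:
  assumes "a > 0" "b > 0" "p \<in> hyperboloid a b" "q \<in> hyperboloid a b"
  shows "Re (qform a b p q) \<ge> 1"
  using reverse_cauchy_schwarz(1)[of a b "a * b"] assms
  by (simp add: Re_qform_hyperboloid mem_hyperboloid_iff)

lemma qform_hyperboloid_eq_one_iff:
  assumes "a > 0" "b > 0" "p \<in> hyperboloid a b" "q \<in> hyperboloid a b"
  shows "Re (qform a b p q) = 1 \<longleftrightarrow> p = q"
  unfolding quat_eq_hyperboloid[OF assms(3,4)] Re_qform_hyperboloid[OF assms(3,4)]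
  using reverse_cauchy_schwarz(2)[of a b "a * b" "Re (qw p)" "Re (qw q)"] assms
  by (simp add: mem_hyperboloid_iff)

lemma hdist_commute: "hdist a b p q = hdist a b q p"
  by (simp add: hdist_def qform_commute)

lemma hdist_le_iff:
  assumes "a > 0" "b > 0" and "p \<in> hyperboloid a b" "q \<in> hyperboloid a b"
    and "p' \<in> hyperboloid a b" "q' \<in> hyperboloid a b"
  shows "hdist a b p q \<le> hdist a b p' q' \<longleftrightarrow> Re (qform a b p q) \<le> Re (qform a b p' q')"
  using qform_hyperboloid_ge_one[OF assms(1-4)] qform_hyperboloid_ge_one[OF assms(1,2,5,6)]
  by (simp add: hdist_def linorder_not_less[symmetric])

lemma hdist_eq_iff:
  assumes "a > 0" "b > 0" and "p \<in> hyperboloid a b" "q \<in> hyperboloid a b"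
    and "p' \<in> hyperboloid a b" "q' \<in> hyperboloid a b"
  shows "hdist a b p q = hdist a b p' q' \<longleftrightarrow> Re (qform a b p q) = Re (qform a b p' q')"
  using hdist_le_iff[OF assms] hdist_le_iff[OF assms(1,2,5,6,3,4)] by (simp add: order_eq_iff)

lemma Re_qw_hyperboloid_ge_one:
  assumes "a > 0" "b > 0" "p \<in> hyperboloid a b"
  shows "Re (qw p) \<ge> 1"
  using qform_hyperboloid_ge_one[OF assms qone_in_hyperboloid] by simp

lemma qdag_qmul: "qdag (qmul a b p q) = qmul a b (qdag q) (qdag p)"
  by (simp add: qdag_def qmul_def algebra_simps)

lemma qmul_self_in_hyperboloid:
  assumes "a > 0" "b > 0" "g \<in> hyperboloid a b"
  shows "qmul a b g g \<in> hyperboloid a b"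
proof -
  have g: "qdag g = g" "qnrm a b g = 1" "Im (qw g) = 0"
    using assms(3) mem_hyperboloid_iff[of g a b] by (auto simp: hyperboloid_def)
  have "Re (qw g) \<ge> 1"
    using Re_qw_hyperboloid_ge_one[OF assms] .
  then have "Re (qw g) * Re (qw g) \<ge> 1"
    using mult_mono[of 1 "Re (qw g)" 1 "Re (qw g)"] by simp
  then have "Re (qtr (qmul a b g g)) > 0"
    using g by (simp add: qmul_self qtr_def)
  with g show ?thesis
    by (simp add: hyperboloid_def qdag_qmul qnrm_qmul)
qed

lemma Re_qform_qmul_self_hyperboloid:
  assumes "p \<in> hyperboloid a b" "g \<in> hyperboloid a b"
  shows "Re (qform a b p (qmul a b g g)) = 2 * Re (qw g) * Re (qform a b p g) - Re (qw p)"
proof -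
  have "Im (qw g) = 0" "qnrm a b g = 1"
    using assms(2) mem_hyperboloid_iff[of g a b] by (auto simp: hyperboloid_def)
  then show ?thesis
    by (simp add: qform_qmul_self qtr_def)
qed

lemma hdist_qone_qmul_self:
  assumes "a > 0" "b > 0" "g \<in> hyperboloid a b"
  shows "hdist a b qone (qmul a b g g) = 2 * hdist a b qone g"
proof -
  have "Re (qform a b qone (qmul a b g g)) = 2 * (Re (qw g))\<^sup>2 - 1"
    using Re_qform_qmul_self_hyperboloid[OF qone_in_hyperboloid assms(3)]
    by (simp add: power2_eq_square) (simp add: qone_def)
  also have "\<dots> = cosh (2 * hdist a b qone g)"
    using Re_qw_hyperboloid_ge_one[OF assms]
    by (simp add: cosh_double_cosh hdist_def)
  finally show ?thesis
    using Re_qw_hyperboloid_ge_one[OF assms] by (simp add: arcosh_cosh_real hdist_def)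
qed

lemma hdist_qmul_self:
  assumes "a > 0" "b > 0" "g \<in> hyperboloid a b"
  shows "hdist a b g (qmul a b g g) = hdist a b qone g"
  using Re_qform_qmul_self_hyperboloid[OF assms(3) assms(3)] assms
  by (simp add: hdist_def qform_self hyperboloid_def)

lemma mem_perp_bisector_qone_qmul_self_iff:
  assumes "a > 0" "b > 0" "g \<in> hyperboloid a b"
  shows "p \<in> perp_bisector a b qone (qmul a b g g) \<longleftrightarrow>
           p \<in> hyperboloid a b \<and> Re (qw p) = Re (qw g) * Re (qform a b p g)"
proof -
  have "hdist a b p qone = hdist a b p (qmul a b g g) \<longleftrightarrow> Re (qw p) = Re (qw g) * Re (qform a b p g)"
    if "p \<in> hyperboloid a b"
    using hdist_eq_iff[OF assms(1,2) that qone_in_hyperboloid that qmul_self_in_hyperboloid[OF assms]]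
      Re_qform_qmul_self_hyperboloid[OF that assms(3)]
    by auto
  then show ?thesis
    by (auto simp: perp_bisector_def)
qed

theorem corollary5p3:
  fixes F :: "real set" and a b d :: real and \<Gamma> :: "quat set" and \<gamma> :: quat
  assumes "real_subfield F" and "a \<in> F" and "b \<in> F" and "d \<in> F"
    and "a > 0" and "b > 0" and "d > 0"
    and "\<Gamma> \<subseteq> quat_alg1 F a b d"
    and "\<gamma> \<in> \<Gamma>" and "\<gamma> \<in> hyperboloid a b"
  shows "geod_segment a b qone (qact a b \<gamma> qone) \<inter> perp_bisector a b qone (qact a b \<gamma> qone) = {\<gamma>}
     \<and> (\<forall>p \<in> perp_bisector a b qone (qact a b \<gamma> qone). hdist a b qone \<gamma> \<le> hdist a b qone p)"
proof -
  note ab = \<open>a > 0\<close> \<open>b > 0\<close> and \<gamma> = \<open>\<gamma> \<in> hyperboloid a b\<close>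
  note one = qone_in_hyperboloid[of a b]
  define Q where "Q = qmul a b \<gamma> \<gamma>"
  have Q_act: "qact a b \<gamma> qone = Q"
    using \<gamma> by (simp add: Q_def qact_qone hyperboloid_def)
  note bisector = mem_perp_bisector_qone_qmul_self_iff[OF ab \<gamma>, folded Q_def]
  have "Re (qw \<gamma>) \<ge> 1"
    using Re_qw_hyperboloid_ge_one[OF ab \<gamma>] .
  have closest: "hdist a b qone \<gamma> \<le> hdist a b qone p" if "p \<in> perp_bisector a b qone Q" for p
  proof -
    have "p \<in> hyperboloid a b" "Re (qw p) = Re (qw \<gamma>) * Re (qform a b p \<gamma>)"
      using that bisector by auto
    moreover have "Re (qform a b p \<gamma>) \<ge> 1"
      using qform_hyperboloid_ge_one[OF ab \<open>p \<in> hyperboloid a b\<close> \<gamma>] .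
    ultimately show ?thesis
      using \<open>Re (qw \<gamma>) \<ge> 1\<close> mult_left_mono[of 1 "Re (qform a b p \<gamma>)" "Re (qw \<gamma>)"]
      by (simp add: hdist_le_iff[OF ab one \<gamma> one])
  qed
  have unique: "p = \<gamma>" if "p \<in> geod_segment a b qone Q \<inter> perp_bisector a b qone Q" for p
  proof -
    have p: "p \<in> hyperboloid a b" "Re (qw p) = Re (qw \<gamma>) * Re (qform a b p \<gamma>)"
      using that bisector by auto
    have "hdist a b qone p + hdist a b p Q = 2 * hdist a b qone \<gamma>" "hdist a b p qone = hdist a b p Q"
      using that hdist_qone_qmul_self[OF ab \<gamma>]
      by (auto simp: Q_def geod_segment_def perp_bisector_def)
    then have "hdist a b qone p = hdist a b qone \<gamma>"
      by (simp add: hdist_commute[of a b p])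
    then have "Re (qw p) = Re (qw \<gamma>)"
      by (simp add: hdist_eq_iff[OF ab one p(1) one \<gamma>])
    with p(2) \<open>Re (qw \<gamma>) \<ge> 1\<close> have "Re (qform a b p \<gamma>) = 1"
      by simp
    then show "p = \<gamma>"
      using qform_hyperboloid_eq_one_iff[OF ab p(1) \<gamma>] by simp
  qed
  have "\<gamma> \<in> geod_segment a b qone Q \<inter> perp_bisector a b qone Q"
    using \<gamma> hdist_qone_qmul_self[OF ab \<gamma>] hdist_qmul_self[OF ab \<gamma>]
      bisector qform_self[of a b \<gamma>]
    by (auto simp: Q_def geod_segment_def hyperboloid_def)
  then show ?thesis
    unfolding Q_act using unique closest by blast
qed

end
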